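(* Let $(\Omega,\Sigma,\mathbb{P})$ be an admissible measure space where $\mathbb{P}$ is a probability measure without atoms, and let $\mathcal{J}(\mathbb{P})$ be the set of all Banach ideal spaces $E$ on $(\Omega,\Sigma,\mathbb{P})$ of maximal width satisfying the norming condition $\|\chi_\Omega\|_E=1$ (spaces $E,F$ identified when $E\subset^1F$ and $F\subset^1E$). Then the lattice $\langle\mathcal{J}(\mathbb{P}),\vee,\wedge\rangle$, with $E\vee F=E+F$ and $E\wedge F=E\cap F$ (ordered by $\subset^{1}$), is Dedekind complete.
   Context: $L_0(\mathbb{P})$ is the vector lattice of classes of measurable real functions on $\Omega$, ordered a.e.; $\chi_A$ is the indicator function of $A$. Admissible measure space: $\mu$ complete; a set $A\subset\Omega$ with $A\cap B\in\Sigma$ for all $B\in\Sigma$ of finite measure lies in $\Sigma$; $\mu$ semifinite; $\mu$ has the direct sum property (a family of pairwise disjoint finite-measure sets $A_i$ such that each finite-measure $B$ is, up to a null set, a countable union of sets $B\cap A_i$). A Banach ideal space (BIS) is a vector subspace $E\subset L_0$ with complete norm such that $y\in E$, $|x|\le|y|$ a.e. imply $x\in E$, $\|x\|_E\le\|y\|_E$. Maximal width: the only $z\in L_0$ with $zy=0$ for all $y\in E$ is $z=0$. $E\subset^1F$: $E\subseteq F$ and $\|x\|_F\le\|x\|_E$ for $x\in E$. $\|x\|_{E\cap F}=\max\{\|x\|_E,\|x\|_F\}$; $\|x\|_{E+F}=\inf\{\|u\|_E+\|v\|_F:u+v=x\}$. Dedekind complete: every nonempty subset bounded above has a least upper bound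 and every nonempty subset bounded below has a greatest lower bound in $\langle\mathcal{J}(\mathbb{P}),\subset^1\rangle$. *)

theory Defs
  imports "HOL-Probability.Probability"
begin

definition complete_msr :: "'a measure \<Rightarrow> bool" where
  "complete_msr M \<longleftrightarrow> (\<forall>A \<in> null_sets M. \<forall>B. B \<subseteq> A \<longrightarrow> B \<in> sets M)"

definition locally_determined :: "'a measure \<Rightarrow> bool" where
  "locally_determined M \<longleftrightarrow>
     (\<forall>A. A \<subseteq> space M \<longrightarrow>
        (\<forall>B \<in> sets M. emeasure M B < \<infinity> \<longrightarrow> A \<inter> B \<in> sets M) \<longrightarrow> A \<in> sets M)"

definition semifinite_msr :: "'a measure \<Rightarrow> bool" where
  "semifinite_msr M \<longleftrightarrow>
     (\<forall>A \<in> sets M. emeasure M A = \<infinity> \<longrightarrow>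
        (\<exists>B \<in> sets M. B \<subseteq> A \<and> 0 < emeasure M B \<and> emeasure M B < \<infinity>))"

definition direct_sum_property :: "'a measure \<Rightarrow> bool" where
  "direct_sum_property M \<longleftrightarrow>
     (\<exists>\<A>. \<A> \<subseteq> sets M \<and> disjoint \<A> \<and> (\<forall>A \<in> \<A>. emeasure M A < \<infinity>) \<and>
        (\<forall>B \<in> sets M. emeasure M B < \<infinity> \<longrightarrow>
           (\<exists>\<C>. \<C> \<subseteq> \<A> \<and> countable \<C> \<and>
               B - (\<Union>A\<in>\<C>. B \<inter> A) \<in> null_sets M)))"

definition admissible :: "'a measure \<Rightarrow> bool" where
  "admissible M \<longleftrightarrow> complete_msr M \<and> locally_determined M \<and> semifinite_msr M
                     \<and> direct_sum_property M"

definition atomless :: "'a measure \<Rightarrow> bool" where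
  "atomless M \<longleftrightarrow>
     (\<forall>A \<in> sets M. 0 < emeasure M A \<longrightarrow>
        (\<exists>B \<in> sets M. B \<subseteq> A \<and> 0 < emeasure M B \<and> emeasure M B < emeasure M A))"

text \<open>Elements of L_0 are represented by measurable real functions; a space is a set of
  such functions together with a norm functional (only its values on the set matter).
  The ideal property makes the set closed under a.e.-equality and the norm a.e.-invariant,
  so this represents a space of equivalence classes.\<close>

type_synonym 'a bis = "('a \<Rightarrow> real) set \<times> (('a \<Rightarrow> real) \<Rightarrow> real)"

definition is_BIS :: "'a measure \<Rightarrow> 'a bis \<Rightarrow> bool" where
  "is_BIS M X \<longleftrightarrow> (case X of (E, N) \<Rightarrow>
     E \<subseteq> borel_measurable M \<and>
     (\<lambda>_. 0) \<in> E \<and>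
     (\<forall>x\<in>E. \<forall>y\<in>E. (\<lambda>t. x t + y t) \<in> E) \<and>
     (\<forall>c::real. \<forall>x\<in>E. (\<lambda>t. c * x t) \<in> E) \<and>
     (\<forall>x\<in>E. \<forall>y\<in>E. N (\<lambda>t. x t + y t) \<le> N x + N y) \<and>
     (\<forall>c::real. \<forall>x\<in>E. N (\<lambda>t. c * x t) = \<bar>c\<bar> * N x) \<and>
     (\<forall>x\<in>E. N x = 0 \<longleftrightarrow> (AE t in M. x t = 0)) \<and>
     (\<forall>f :: nat \<Rightarrow> 'a \<Rightarrow> real. (\<forall>n. f n \<in> E) \<longrightarrow>
        (\<forall>\<epsilon>>0. \<exists>K. \<forall>m\<ge>K. \<forall>n\<ge>K. N (\<lambda>t. f m t - f n t) < \<epsilon>) \<longrightarrow>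
        (\<exists>g\<in>E. (\<lambda>n. N (\<lambda>t. f n t - g t)) \<longlonglongrightarrow> 0)) \<and>
     (\<forall>x \<in> borel_measurable M. \<forall>y\<in>E. (AE t in M. \<bar>x t\<bar> \<le> \<bar>y t\<bar>) \<longrightarrow>
        x \<in> E \<and> N x \<le> N y))"

definition maximal_width :: "'a measure \<Rightarrow> 'a bis \<Rightarrow> bool" where
  "maximal_width M X \<longleftrightarrow>
     (\<forall>z \<in> borel_measurable M. (\<forall>y \<in> fst X. AE t in M. z t * y t = 0) \<longrightarrow>
        (AE t in M. z t = 0))"

definition J_class :: "'a measure \<Rightarrow> 'a bis set" where
  "J_class M = {X. is_BIS M X \<and> maximal_width M X \<and>
                   (\<lambda>_. 1) \<in> fst X \<and> snd X (\<lambda>_. 1) = 1}"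

definition sub1 :: "'a bis \<Rightarrow> 'a bis \<Rightarrow> bool" where
  "sub1 X Y \<longleftrightarrow> fst X \<subseteq> fst Y \<and> (\<forall>x \<in> fst X. snd Y x \<le> snd X x)"

text \<open>Dedekind completeness of a set with respect to a preorder (modulo the induced
  equivalence): every nonempty subset bounded above has a least upper bound in the set,
  and every nonempty subset bounded below has a greatest lower bound in the set.\<close>
definition dedekind_complete :: "'b set \<Rightarrow> ('b \<Rightarrow> 'b \<Rightarrow> bool) \<Rightarrow> bool" where
  "dedekind_complete J le \<longleftrightarrow>
     (\<forall>S. S \<subseteq> J \<and> S \<noteq> {} \<and> (\<exists>U\<in>J. \<forall>X\<in>S. le X U) \<longrightarrow>
        (\<exists>L\<in>J. (\<forall>X\<in>S. le X L) \<and> (\<forall>U\<in>J. (\<forall>X\<in>S. le X U) \<longrightarrow> le L U))) \<and>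
     (\<forall>S. S \<subseteq> J \<and> S \<noteq> {} \<and> (\<exists>U\<in>J. \<forall>X\<in>S. le U X) \<longrightarrow>
        (\<exists>L\<in>J. (\<forall>X\<in>S. le L X) \<and> (\<forall>U\<in>J. (\<forall>X\<in>S. le U X) \<longrightarrow> le U L)))"

end

theory Submission
  imports Defs
begin

text \<open>Every nonempty family in J(P) has an infimum: the intersection of its members,
  normed by the supremum of the norms and restricted to the functions where this supremum
  is finite. It contains the constant 1 with norm 1, hence has maximal width. It is complete
  because a Cauchy sequence is Cauchy in every member; its limits in different members agree
  a.e., since norm convergence in a Banach ideal space forces a.e. convergence along a
  subsequence; and the convergence is uniform over the family. The supremum of a nonempty set
  bounded above is then the infimum of its upper bounds.\<close>

section \<open>Banach ideal spaces\<close>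

lemma is_BIS_measurable: "is_BIS M X \<Longrightarrow> x \<in> fst X \<Longrightarrow> x \<in> borel_measurable M"
  by (cases X) (auto simp: is_BIS_def)

lemma is_BIS_zero: "is_BIS M X \<Longrightarrow> (\<lambda>_. 0) \<in> fst X"
  by (cases X) (simp add: is_BIS_def)

lemma is_BIS_add: "is_BIS M X \<Longrightarrow> x \<in> fst X \<Longrightarrow> y \<in> fst X \<Longrightarrow> (\<lambda>t. x t + y t) \<in> fst X"
  by (cases X) (simp add: is_BIS_def)

lemma is_BIS_scale: "is_BIS M X \<Longrightarrow> x \<in> fst X \<Longrightarrow> (\<lambda>t. c * x t) \<in> fst X"
  by (cases X) (simp add: is_BIS_def)

lemma is_BIS_norm_add:
  "is_BIS M X \<Longrightarrow> x \<in> fst X \<Longrightarrow> y \<in> fst X \<Longrightarrow> snd X (\<lambda>t. x t + y t) \<le> snd X x + snd X y"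
  by (cases X) (simp add: is_BIS_def)

lemma is_BIS_norm_scale: "is_BIS M X \<Longrightarrow> x \<in> fst X \<Longrightarrow> snd X (\<lambda>t. c * x t) = \<bar>c\<bar> * snd X x"
  by (cases X) (simp add: is_BIS_def)

lemma is_BIS_norm_eq_0_iff: "is_BIS M X \<Longrightarrow> x \<in> fst X \<Longrightarrow> snd X x = 0 \<longleftrightarrow> (AE t in M. x t = 0)"
  by (cases X) (simp add: is_BIS_def)

lemma is_BIS_complete:
  "is_BIS M X \<Longrightarrow> (\<And>n. f n \<in> fst X) \<Longrightarrow>
    \<forall>\<epsilon>>0. \<exists>K. \<forall>m\<ge>K. \<forall>n\<ge>K. snd X (\<lambda>t. f m t - f n t) < \<epsilon> \<Longrightarrow>
    \<exists>g\<in>fst X. (\<lambda>n. snd X (\<lambda>t. f n t - g t)) \<longlonglongrightarrow> 0"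
  by (cases X) (simp add: is_BIS_def)

lemma is_BIS_ideal:
  "is_BIS M X \<Longrightarrow> x \<in> borel_measurable M \<Longrightarrow> y \<in> fst X \<Longrightarrow> AE t in M. \<bar>x t\<bar> \<le> \<bar>y t\<bar> \<Longrightarrow>
    x \<in> fst X \<and> snd X x \<le> snd X y"
  by (cases X) (simp add: is_BIS_def)

lemma is_BIS_diff: "is_BIS M X \<Longrightarrow> x \<in> fst X \<Longrightarrow> y \<in> fst X \<Longrightarrow> (\<lambda>t. x t - y t) \<in> fst X"
  using is_BIS_add[of M X x "\<lambda>t. (-1) * y t"] is_BIS_scale[of M X y "-1"] by simp

lemma is_BIS_norm_zero: "is_BIS M X \<Longrightarrow> snd X (\<lambda>_. 0) = 0"
  using is_BIS_zero is_BIS_norm_eq_0_iff by fastforce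

lemma is_BIS_norm_nonneg:
  assumes "is_BIS M X" "x \<in> fst X"
  shows "0 \<le> snd X x"
proof -
  have "0 = snd X (\<lambda>t. x t + (-1) * x t)"
    using is_BIS_norm_zero[OF assms(1)] by simp
  also have "\<dots> \<le> snd X x + snd X (\<lambda>t. (-1) * x t)"
    using assms by (intro is_BIS_norm_add is_BIS_scale)
  also have "\<dots> = 2 * snd X x"
    using is_BIS_norm_scale[OF assms, of "-1"] by simp
  finally show ?thesis by simp
qed

lemma is_BIS_norm_diff_commute:
  assumes "is_BIS M X" "x \<in> fst X" "y \<in> fst X"
  shows "snd X (\<lambda>t. x t - y t) = snd X (\<lambda>t. y t - x t)"
  using is_BIS_norm_scale[OF assms(1) is_BIS_diff[OF assms(1,3,2)], of "-1"] by simp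

lemma is_BIS_norm_diff_triangle:
  assumes "is_BIS M X" "x \<in> fst X" "y \<in> fst X" "z \<in> fst X"
  shows "snd X (\<lambda>t. x t - z t) \<le> snd X (\<lambda>t. x t - y t) + snd X (\<lambda>t. y t - z t)"
  using is_BIS_norm_add[OF assms(1) is_BIS_diff[OF assms(1,2,3)] is_BIS_diff[OF assms(1,3,4)]]
  by simp

lemma is_BIS_AE_cong:
  assumes B: "is_BIS M X" and y: "y \<in> fst X" and x: "x \<in> borel_measurable M"
    and eq: "AE t in M. x t = y t"
  shows "x \<in> fst X \<and> snd X x = snd X y"
proof -
  have "x \<in> fst X \<and> snd X x \<le> snd X y"
    using eq by (intro is_BIS_ideal[OF B x y]) auto
  moreover have "snd X y \<le> snd X x"
    using eq calculation by (intro is_BIS_ideal[OF B is_BIS_measurable[OF B y], THEN conjunct2]) auto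
  ultimately show ?thesis by simp
qed

lemma is_BIS_sum:
  assumes B: "is_BIS M X" and u: "\<And>k. k \<in> A \<Longrightarrow> u k \<in> fst X" and "finite A"
  shows "(\<lambda>t. \<Sum>k\<in>A. u k t) \<in> fst X \<and> snd X (\<lambda>t. \<Sum>k\<in>A. u k t) \<le> (\<Sum>k\<in>A. snd X (u k))"
  using \<open>finite A\<close> u
proof (induction A rule: finite_induct)
  case empty
  then show ?case using is_BIS_zero[OF B] is_BIS_norm_zero[OF B] by simp
next
  case (insert a A)
  then show ?case
    using is_BIS_add[OF B, of "u a" "\<lambda>t. \<Sum>k\<in>A. u k t"]
      is_BIS_norm_add[OF B, of "u a" "\<lambda>t. \<Sum>k\<in>A. u k t"] by fastforce
qed

lemma is_BIS_norm_diff_limit_le: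
  assumes B: "is_BIS M X" and f: "\<And>m. f m \<in> fst X" and g: "g \<in> fst X"
    and lim: "(\<lambda>m. snd X (\<lambda>t. f m t - g t)) \<longlonglongrightarrow> 0"
    and bound: "\<And>m. m \<ge> K \<Longrightarrow> snd X (\<lambda>t. f n t - f m t) \<le> \<epsilon>"
  shows "snd X (\<lambda>t. f n t - g t) \<le> \<epsilon>"
proof (rule tendsto_le[OF trivial_limit_sequentially _ tendsto_const])
  show "(\<lambda>m. \<epsilon> + snd X (\<lambda>t. f m t - g t)) \<longlonglongrightarrow> \<epsilon>"
    using tendsto_add[OF tendsto_const lim] by simp
  have "snd X (\<lambda>t. f n t - g t) \<le> \<epsilon> + snd X (\<lambda>t. f m t - g t)" if "m \<ge> K" for m
    using is_BIS_norm_diff_triangle[OF B f f g, of n m] bound[OF that] by linarith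
  then show "\<forall>\<^sub>F m in sequentially. snd X (\<lambda>t. f n t - g t) \<le> \<epsilon> + snd X (\<lambda>t. f m t - g t)"
    by (auto simp: eventually_sequentially)
qed

section \<open>Norm convergence and convergence almost everywhere\<close>

lemma is_BIS_le_norm_limit_of_incseq:
  assumes B: "is_BIS M X" and s: "\<And>n. s n \<in> fst X" and S: "S \<in> fst X"
    and inc: "\<And>t. incseq (\<lambda>n. s n t)" and lim: "(\<lambda>n. snd X (\<lambda>t. s n t - S t)) \<longlonglongrightarrow> 0"
  shows "AE t in M. s K t \<le> S t"
proof -
  define w where "w = (\<lambda>t. max (s K t - S t) 0)"
  have w: "w \<in> borel_measurable M"
    unfolding w_def using is_BIS_measurable[OF B s] is_BIS_measurable[OF B S] by measurable
  have w_le: "AE t in M. \<bar>w t\<bar> \<le> \<bar>s m t - S t\<bar>" if "m \<ge> K" for m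
  proof (intro AE_I2)
    fix t
    show "\<bar>w t\<bar> \<le> \<bar>s m t - S t\<bar>"
      using incseqD[OF inc that, of t] by (auto simp: w_def)
  qed
  have wX: "w \<in> fst X"
    using is_BIS_ideal[OF B w is_BIS_diff[OF B s S] w_le] by blast
  have "snd X w \<le> 0"
  proof (rule tendsto_le[OF trivial_limit_sequentially lim tendsto_const])
    show "\<forall>\<^sub>F m in sequentially. snd X w \<le> snd X (\<lambda>t. s m t - S t)"
      using is_BIS_ideal[OF B w is_BIS_diff[OF B s S] w_le]
      by (auto simp: eventually_sequentially)
  qed
  then have "AE t in M. w t = 0"
    using is_BIS_norm_nonneg[OF B wX] is_BIS_norm_eq_0_iff[OF B wX] by simp
  then show ?thesis
    by eventually_elim (simp add: w_def)
qed

text \<open>The partial sums form a Cauchy sequence in the norm; their limit dominates them a.e.,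
  which bounds the series pointwise a.e.\<close>
lemma is_BIS_AE_summable:
  assumes B: "is_BIS M X" and u: "\<And>k. u k \<in> fst X" and nonneg: "\<And>k t. 0 \<le> u k t"
    and summable: "summable (\<lambda>k. snd X (u k))"
  shows "AE t in M. summable (\<lambda>k. u k t)"
proof -
  define s where "s n = (\<lambda>t. \<Sum>k<n. u k t)" for n
  have s: "s n \<in> fst X" for n
    unfolding s_def using is_BIS_sum[OF B, of "{..<n}" u] u by simp
  have tail: "snd X (\<lambda>t. s m t - s n t) \<le> (\<Sum>k\<in>{n..<m}. snd X (u k))" if "n \<le> m" for m n
  proof -
    have "(\<Sum>k<m. u k t) - (\<Sum>k<n. u k t) = (\<Sum>k\<in>{n..<m}. u k t)" for t
      using sum_diff_nat_ivl[of 0 n m "\<lambda>k. u k t"] that by (simp add: atLeast0LessThan)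
    then have "(\<lambda>t. s m t - s n t) = (\<lambda>t. \<Sum>k\<in>{n..<m}. u k t)"
      by (simp add: s_def)
    then show ?thesis using is_BIS_sum[OF B, of "{n..<m}" u] u by simp
  qed
  have "\<forall>\<epsilon>>0. \<exists>K. \<forall>m\<ge>K. \<forall>n\<ge>K. snd X (\<lambda>t. s m t - s n t) < \<epsilon>"
  proof (intro allI impI)
    fix \<epsilon> :: real assume "\<epsilon> > 0"
    then obtain K where K: "\<And>n m. n \<ge> K \<Longrightarrow> \<bar>\<Sum>k\<in>{n..<m}. snd X (u k)\<bar> < \<epsilon>"
      using summable unfolding summable_Cauchy by fastforce
    have less: "snd X (\<lambda>t. s m t - s n t) < \<epsilon>" if "n \<ge> K" "n \<le> m" for m n
      using tail[OF that(2)] K[OF that(1), of m] by linarith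
    have "snd X (\<lambda>t. s m t - s n t) < \<epsilon>" if "m \<ge> K" "n \<ge> K" for m n
    proof (cases "n \<le> m")
      case True
      then show ?thesis using less that by blast
    next
      case False
      then show ?thesis using less[of m n] that is_BIS_norm_diff_commute[OF B s s, of m n] by simp
    qed
    then show "\<exists>K. \<forall>m\<ge>K. \<forall>n\<ge>K. snd X (\<lambda>t. s m t - s n t) < \<epsilon>"
      by blast
  qed
  then obtain S where S: "S \<in> fst X" and lim: "(\<lambda>n. snd X (\<lambda>t. s n t - S t)) \<longlonglongrightarrow> 0"
    using is_BIS_complete[OF B, of s] s by blast
  have "incseq (\<lambda>n. s n t)" for t
    unfolding s_def by (intro incseq_SucI) (simp add: nonneg)
  then have "\<forall>K. AE t in M. s K t \<le> S t"
    using is_BIS_le_norm_limit_of_incseq[OF B, of s S] s S lim by blast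
  then have "AE t in M. \<forall>K. s K t \<le> S t"
    by (simp add: AE_all_countable)
  then show ?thesis
    by eventually_elim (rule summableI_nonneg_bounded, auto simp: nonneg s_def)
qed

lemma is_BIS_AE_tendsto_of_summable_norm:
  assumes B: "is_BIS M X" and v: "\<And>k. v k \<in> fst X" and a: "a \<in> fst X"
    and summable: "summable (\<lambda>k. snd X (\<lambda>t. v k t - a t))"
  shows "AE t in M. (\<lambda>k. v k t) \<longlonglongrightarrow> a t"
proof -
  define u where "u k = (\<lambda>t. \<bar>v k t - a t\<bar>)" for k
  have u_meas: "u k \<in> borel_measurable M" for k
    unfolding u_def using is_BIS_measurable[OF B v] is_BIS_measurable[OF B a] by measurable
  have "u k \<in> fst X \<and> snd X (u k) \<le> snd X (\<lambda>t. v k t - a t)" for k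
    by (rule is_BIS_ideal[OF B u_meas is_BIS_diff[OF B v a]]) (simp add: u_def)
  moreover from this have "summable (\<lambda>k. snd X (u k))"
    by (intro summable_comparison_test'[OF summable])
      (simp add: is_BIS_norm_nonneg[OF B])
  ultimately have "AE t in M. summable (\<lambda>k. u k t)"
    by (intro is_BIS_AE_summable[OF B]) (auto simp: u_def)
  then show ?thesis
    by eventually_elim
      (auto simp: u_def tendsto_rabs_zero_iff LIM_zero_iff dest: summable_LIMSEQ_zero)
qed

lemma is_BIS_limits_AE_eq:
  assumes BX: "is_BIS M X" and BY: "is_BIS M Y"
    and fX: "\<And>n. f n \<in> fst X" and fY: "\<And>n. f n \<in> fst Y" and a: "a \<in> fst X" and b: "b \<in> fst Y"
    and lim_a: "(\<lambda>n. snd X (\<lambda>t. f n t - a t)) \<longlonglongrightarrow> 0"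
    and lim_b: "(\<lambda>n. snd Y (\<lambda>t. f n t - b t)) \<longlonglongrightarrow> 0"
  shows "AE t in M. a t = b t"
proof -
  define d where "d n = snd X (\<lambda>t. f n t - a t) + snd Y (\<lambda>t. f n t - b t)" for n
  have lim_d: "d \<longlonglongrightarrow> 0"
    unfolding d_def using tendsto_add_zero[OF lim_a lim_b] .
  have "\<exists>n. d n < (1/2)^k" for k
    using order_tendstoD(2)[OF lim_d, of "(1/2)^k"] by (auto simp: eventually_sequentially)
  then obtain r where r: "\<And>k. d (r k) < (1/2)^k"
    by metis
  have bounds: "snd X (\<lambda>t. f (r k) t - a t) \<le> (1/2)^k \<and> snd Y (\<lambda>t. f (r k) t - b t) \<le> (1/2)^k" for k
    using r[of k] is_BIS_norm_nonneg[OF BX is_BIS_diff[OF BX fX a], of "r k"]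
      is_BIS_norm_nonneg[OF BY is_BIS_diff[OF BY fY b], of "r k"] unfolding d_def by linarith
  have geometric: "summable (\<lambda>k. (1/2::real)^k)"
    by simp
  have "AE t in M. (\<lambda>k. f (r k) t) \<longlonglongrightarrow> a t"
    using bounds is_BIS_norm_nonneg[OF BX is_BIS_diff[OF BX fX a]]
    by (intro is_BIS_AE_tendsto_of_summable_norm[OF BX _ a] summable_comparison_test'[OF geometric])
      (auto simp: fX)
  moreover have "AE t in M. (\<lambda>k. f (r k) t) \<longlonglongrightarrow> b t"
    using bounds is_BIS_norm_nonneg[OF BY is_BIS_diff[OF BY fY b]]
    by (intro is_BIS_AE_tendsto_of_summable_norm[OF BY _ b] summable_comparison_test'[OF geometric])
      (auto simp: fY)
  ultimately show ?thesis
    by eventually_elim (rule LIMSEQ_unique)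
qed

section \<open>Intersection of a family of Banach ideal spaces\<close>

definition Inter_space :: "'a measure \<Rightarrow> 'a bis set \<Rightarrow> ('a \<Rightarrow> real) set" where
  "Inter_space M S = {x \<in> borel_measurable M. (\<forall>X\<in>S. x \<in> fst X) \<and> bdd_above ((\<lambda>X. snd X x) ` S)}"

definition Sup_norm :: "'a bis set \<Rightarrow> ('a \<Rightarrow> real) \<Rightarrow> real" where
  "Sup_norm S x = (SUP X\<in>S. snd X x)"

lemma Inter_spaceD: "x \<in> Inter_space M S \<Longrightarrow> X \<in> S \<Longrightarrow> x \<in> fst X"
  unfolding Inter_space_def by auto

lemma Inter_space_measurable: "x \<in> Inter_space M S \<Longrightarrow> x \<in> borel_measurable M"
  unfolding Inter_space_def by auto

lemma Sup_norm_upper: "x \<in> Inter_space M S \<Longrightarrow> X \<in> S \<Longrightarrow> snd X x \<le> Sup_norm S x"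
  unfolding Sup_norm_def Inter_space_def by (auto intro: cSUP_upper)

lemma Sup_norm_least: "S \<noteq> {} \<Longrightarrow> (\<And>X. X \<in> S \<Longrightarrow> snd X x \<le> c) \<Longrightarrow> Sup_norm S x \<le> c"
  unfolding Sup_norm_def by (rule cSUP_least)

locale BIS_family =
  fixes M :: "'a measure" and S :: "'a bis set"
  assumes nonempty: "S \<noteq> {}" and BIS: "X \<in> S \<Longrightarrow> is_BIS M X"
begin

lemma Inter_spaceI:
  assumes "\<And>X. X \<in> S \<Longrightarrow> x \<in> fst X" and "\<And>X. X \<in> S \<Longrightarrow> snd X x \<le> c"
  shows "x \<in> Inter_space M S"
proof -
  obtain X0 where "X0 \<in> S" using nonempty by blast
  then have "x \<in> borel_measurable M"
    using is_BIS_measurable[OF BIS] assms(1) by blast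
  moreover have "bdd_above ((\<lambda>X. snd X x) ` S)"
    by (rule bdd_aboveI2) (rule assms(2))
  ultimately show ?thesis
    using assms(1) unfolding Inter_space_def by blast
qed

lemma Sup_norm_nonneg:
  assumes x: "x \<in> Inter_space M S"
  shows "0 \<le> Sup_norm S x"
proof -
  obtain X where X: "X \<in> S" using nonempty by blast
  show ?thesis
    using is_BIS_norm_nonneg[OF BIS[OF X] Inter_spaceD[OF x X]] Sup_norm_upper[OF x X] by linarith
qed

lemma Inter_space_zero: "(\<lambda>_. 0) \<in> Inter_space M S"
  by (rule Inter_spaceI[where c=0]) (simp_all add: is_BIS_zero[OF BIS] is_BIS_norm_zero[OF BIS])

lemma Inter_space_add:
  assumes "x \<in> Inter_space M S" "y \<in> Inter_space M S"
  shows "(\<lambda>t. x t + y t) \<in> Inter_space M S" and "Sup_norm S (\<lambda>t. x t + y t) \<le> Sup_norm S x + Sup_norm S y"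
proof -
  have bound: "snd X (\<lambda>t. x t + y t) \<le> Sup_norm S x + Sup_norm S y" if "X \<in> S" for X
    using is_BIS_norm_add[OF BIS[OF that] Inter_spaceD[OF assms(1) that] Inter_spaceD[OF assms(2) that]]
      Sup_norm_upper[OF assms(1) that] Sup_norm_upper[OF assms(2) that] by linarith
  show "(\<lambda>t. x t + y t) \<in> Inter_space M S"
    using is_BIS_add[OF BIS Inter_spaceD[OF assms(1)] Inter_spaceD[OF assms(2)]] bound
    by (rule Inter_spaceI)
  show "Sup_norm S (\<lambda>t. x t + y t) \<le> Sup_norm S x + Sup_norm S y"
    using bound by (rule Sup_norm_least[OF nonempty])
qed

lemma Inter_space_scale:
  assumes "x \<in> Inter_space M S"
  shows "(\<lambda>t. c * x t) \<in> Inter_space M S" and "Sup_norm S (\<lambda>t. c * x t) \<le> \<bar>c\<bar> * Sup_norm S x"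
proof -
  have bound: "snd X (\<lambda>t. c * x t) \<le> \<bar>c\<bar> * Sup_norm S x" if "X \<in> S" for X
    using is_BIS_norm_scale[OF BIS[OF that] Inter_spaceD[OF assms that]]
      Sup_norm_upper[OF assms that] by (simp add: mult_left_mono)
  show "(\<lambda>t. c * x t) \<in> Inter_space M S"
    using is_BIS_scale[OF BIS Inter_spaceD[OF assms]] bound
    by (rule Inter_spaceI)
  show "Sup_norm S (\<lambda>t. c * x t) \<le> \<bar>c\<bar> * Sup_norm S x"
    using bound by (rule Sup_norm_least[OF nonempty])
qed

lemma Inter_space_diff:
  "x \<in> Inter_space M S \<Longrightarrow> y \<in> Inter_space M S \<Longrightarrow> (\<lambda>t. x t - y t) \<in> Inter_space M S"
  using Inter_space_add(1)[OF _ Inter_space_scale(1), of x y "-1"] by simp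

lemma Sup_norm_scale:
  assumes x: "x \<in> Inter_space M S"
  shows "Sup_norm S (\<lambda>t. c * x t) = \<bar>c\<bar> * Sup_norm S x"
proof (cases "c = 0")
  case True
  then show ?thesis
    using Sup_norm_nonneg[OF Inter_space_scale(1)[OF x, of c]] Inter_space_scale(2)[OF x, of c] by simp
next
  case False
  have "Sup_norm S x = Sup_norm S (\<lambda>t. (1/c) * (c * x t))"
    using False by simp
  also have "\<dots> \<le> \<bar>1/c\<bar> * Sup_norm S (\<lambda>t. c * x t)"
    by (rule Inter_space_scale(2)[OF Inter_space_scale(1)[OF x]])
  finally have "\<bar>c\<bar> * Sup_norm S x \<le> Sup_norm S (\<lambda>t. c * x t)"
    using False by (simp add: field_simps)
  then show ?thesis
    using Inter_space_scale(2)[OF x, of c] by linarith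
qed

lemma Sup_norm_eq_0_iff:
  assumes x: "x \<in> Inter_space M S"
  shows "Sup_norm S x = 0 \<longleftrightarrow> (AE t in M. x t = 0)"
proof
  obtain X0 where X0: "X0 \<in> S" using nonempty by blast
  assume "Sup_norm S x = 0"
  then have "snd X0 x = 0"
    using Sup_norm_upper[OF x X0] is_BIS_norm_nonneg[OF BIS[OF X0] Inter_spaceD[OF x X0]] by linarith
  then show "AE t in M. x t = 0"
    using is_BIS_norm_eq_0_iff[OF BIS[OF X0] Inter_spaceD[OF x X0]] by simp
next
  assume "AE t in M. x t = 0"
  then have "Sup_norm S x \<le> 0"
    using is_BIS_norm_eq_0_iff[OF BIS Inter_spaceD[OF x]] by (intro Sup_norm_least[OF nonempty]) auto
  then show "Sup_norm S x = 0"
    using Sup_norm_nonneg[OF x] by linarith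
qed

lemma Inter_space_ideal:
  assumes x: "x \<in> borel_measurable M" and y: "y \<in> Inter_space M S"
    and le: "AE t in M. \<bar>x t\<bar> \<le> \<bar>y t\<bar>"
  shows "x \<in> Inter_space M S \<and> Sup_norm S x \<le> Sup_norm S y"
proof -
  have "x \<in> fst X \<and> snd X x \<le> Sup_norm S y" if X: "X \<in> S" for X
    using is_BIS_ideal[OF BIS[OF X] x Inter_spaceD[OF y X] le] Sup_norm_upper[OF y X] by linarith
  then show ?thesis
    using Inter_spaceI[of x] Sup_norm_least[OF nonempty, of x] by blast
qed

text \<open>Limits in different members of the family agree a.e., so the limit taken in one
  member is a limit in all of them.\<close>
lemma common_limit:
  assumes f: "\<And>n X. X \<in> S \<Longrightarrow> f n \<in> fst X"
    and cauchy: "\<And>X. X \<in> S \<Longrightarrow> \<forall>\<epsilon>>0. \<exists>K. \<forall>m\<ge>K. \<forall>n\<ge>K. snd X (\<lambda>t. f m t - f n t) < \<epsilon>"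
  obtains g where "\<And>X. X \<in> S \<Longrightarrow> g \<in> fst X \<and> (\<lambda>n. snd X (\<lambda>t. f n t - g t)) \<longlonglongrightarrow> 0"
proof -
  have "\<exists>g. g \<in> fst X \<and> (\<lambda>n. snd X (\<lambda>t. f n t - g t)) \<longlonglongrightarrow> 0" if "X \<in> S" for X
    using is_BIS_complete[OF BIS[OF that], of f] f[OF that] cauchy[OF that] by blast
  then have "\<forall>X\<in>S. \<exists>g. g \<in> fst X \<and> (\<lambda>n. snd X (\<lambda>t. f n t - g t)) \<longlonglongrightarrow> 0"
    by blast
  then obtain lim where "\<forall>X\<in>S. lim X \<in> fst X \<and> (\<lambda>n. snd X (\<lambda>t. f n t - lim X t)) \<longlonglongrightarrow> 0"
    by (rule bchoice[THEN exE])
  then have lim: "lim X \<in> fst X \<and> (\<lambda>n. snd X (\<lambda>t. f n t - lim X t)) \<longlonglongrightarrow> 0" if "X \<in> S" for X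
    using that by blast
  obtain X0 where X0: "X0 \<in> S" using nonempty by blast
  define g where "g = lim X0"
  have g: "g \<in> borel_measurable M"
    unfolding g_def using is_BIS_measurable[OF BIS[OF X0]] lim[OF X0] by blast
  have "g \<in> fst X \<and> (\<lambda>n. snd X (\<lambda>t. f n t - g t)) \<longlonglongrightarrow> 0" if X: "X \<in> S" for X
  proof -
    have ae: "AE t in M. g t = lim X t"
      unfolding g_def using lim[OF X0] lim[OF X]
      by (intro is_BIS_limits_AE_eq[OF BIS[OF X0] BIS[OF X], of f]) (auto simp: f X0 X)
    have gX: "g \<in> fst X"
      using is_BIS_AE_cong[OF BIS[OF X] _ g ae] lim[OF X] by blast
    have "snd X (\<lambda>t. f n t - g t) = snd X (\<lambda>t. f n t - lim X t)" for n
      using ae is_BIS_AE_cong[OF BIS[OF X] is_BIS_diff[OF BIS[OF X] f[OF X]], of "lim X" "\<lambda>t. f n t - g t"]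
        is_BIS_measurable[OF BIS[OF X] is_BIS_diff[OF BIS[OF X] f[OF X] gX]] lim[OF X]
      by (fastforce elim: AE_mp)
    then show ?thesis
      using gX lim[OF X] by simp
  qed
  then show thesis
    using that by blast
qed

lemma Inter_space_tendsto_if_uniform:
  assumes f: "\<And>n. f n \<in> Inter_space M S" and g: "\<And>X. X \<in> S \<Longrightarrow> g \<in> fst X"
    and uniform: "\<And>\<epsilon>. \<epsilon> > 0 \<Longrightarrow> \<exists>K. \<forall>n\<ge>K. \<forall>X\<in>S. snd X (\<lambda>t. f n t - g t) \<le> \<epsilon>"
  shows "g \<in> Inter_space M S" and "(\<lambda>n. Sup_norm S (\<lambda>t. f n t - g t)) \<longlonglongrightarrow> 0"
proof -
  obtain K where K: "\<And>n X. n \<ge> K \<Longrightarrow> X \<in> S \<Longrightarrow> snd X (\<lambda>t. f n t - g t) \<le> 1"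
    using uniform[of 1] by auto
  show g_mem: "g \<in> Inter_space M S"
  proof (rule Inter_spaceI[where c="1 + Sup_norm S (f K)"])
    fix X assume X: "X \<in> S"
    note fX = Inter_spaceD[OF f X]
    show "g \<in> fst X" using g[OF X] .
    have "snd X (\<lambda>t. g t - 0) \<le> snd X (\<lambda>t. g t - f K t) + snd X (\<lambda>t. f K t - 0)"
      using is_BIS_norm_diff_triangle[OF BIS[OF X] g[OF X] fX is_BIS_zero[OF BIS[OF X]]] .
    then show "snd X g \<le> 1 + Sup_norm S (f K)"
      using K[OF order_refl X] is_BIS_norm_diff_commute[OF BIS[OF X] g[OF X] fX, of K]
        Sup_norm_upper[OF f X, of K] by simp
  qed
  show "(\<lambda>n. Sup_norm S (\<lambda>t. f n t - g t)) \<longlonglongrightarrow> 0"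
  proof (rule order_tendstoI)
    fix a :: real assume "a < 0"
    then have "a < Sup_norm S (\<lambda>t. f n t - g t)" for n
      using Sup_norm_nonneg[OF Inter_space_diff[OF f[of n] g_mem]] by linarith
    then show "\<forall>\<^sub>F n in sequentially. a < Sup_norm S (\<lambda>t. f n t - g t)"
      by simp
  next
    fix a :: real assume "a > 0"
    then obtain K where "\<And>n X. n \<ge> K \<Longrightarrow> X \<in> S \<Longrightarrow> snd X (\<lambda>t. f n t - g t) \<le> a/2"
      using uniform[of "a/2"] by auto
    then have "Sup_norm S (\<lambda>t. f n t - g t) < a" if "n \<ge> K" for n
      using that Sup_norm_least[OF nonempty, of "\<lambda>t. f n t - g t" "a/2"] \<open>a > 0\<close> by force
    then show "\<forall>\<^sub>F n in sequentially. Sup_norm S (\<lambda>t. f n t - g t) < a"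
      by (auto simp: eventually_sequentially)
  qed
qed

lemma Inter_space_complete:
  assumes f: "\<And>n. f n \<in> Inter_space M S"
    and cauchy: "\<forall>\<epsilon>>0. \<exists>K. \<forall>m\<ge>K. \<forall>n\<ge>K. Sup_norm S (\<lambda>t. f m t - f n t) < \<epsilon>"
  shows "\<exists>g\<in>Inter_space M S. (\<lambda>n. Sup_norm S (\<lambda>t. f n t - g t)) \<longlonglongrightarrow> 0"
proof -
  have fX: "f n \<in> fst X" if "X \<in> S" for n X
    using Inter_spaceD[OF f that] .
  have diff_le: "snd X (\<lambda>t. f m t - f n t) \<le> Sup_norm S (\<lambda>t. f m t - f n t)" if "X \<in> S" for X m n
    using Sup_norm_upper[OF Inter_space_diff[OF f f] that] .
  have "\<forall>\<epsilon>>0. \<exists>K. \<forall>m\<ge>K. \<forall>n\<ge>K. snd X (\<lambda>t. f m t - f n t) < \<epsilon>" if "X \<in> S" for X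
    using cauchy diff_le[OF that] by (meson le_less_trans)
  then obtain g where lim: "\<And>X. X \<in> S \<Longrightarrow> g \<in> fst X \<and> (\<lambda>n. snd X (\<lambda>t. f n t - g t)) \<longlonglongrightarrow> 0"
    using common_limit[of f] fX by blast
  have uniform: "\<exists>K. \<forall>n\<ge>K. \<forall>X\<in>S. snd X (\<lambda>t. f n t - g t) \<le> \<epsilon>" if "\<epsilon> > 0" for \<epsilon>
  proof -
    obtain K where K: "\<And>m n. m \<ge> K \<Longrightarrow> n \<ge> K \<Longrightarrow> Sup_norm S (\<lambda>t. f n t - f m t) < \<epsilon>"
      using cauchy \<open>\<epsilon> > 0\<close> by blast
    have "snd X (\<lambda>t. f n t - g t) \<le> \<epsilon>" if n: "n \<ge> K" and X: "X \<in> S" for n X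
    proof (rule is_BIS_norm_diff_limit_le[OF BIS[OF X], where K=K])
      show "f m \<in> fst X" for m
        using fX[OF X] .
      show "g \<in> fst X" "(\<lambda>m. snd X (\<lambda>t. f m t - g t)) \<longlonglongrightarrow> 0"
        using lim[OF X] by blast+
      show "snd X (\<lambda>t. f n t - f m t) \<le> \<epsilon>" if "m \<ge> K" for m
        using K[OF that n] diff_le[OF X, of n m] by linarith
    qed
    then show ?thesis by blast
  qed
  show ?thesis
    using Inter_space_tendsto_if_uniform[OF f _ uniform] lim by blast
qed

lemma is_BIS_Inter: "is_BIS M (Inter_space M S, Sup_norm S)"
  unfolding is_BIS_def prod.case
proof (intro conjI ballI allI impI)
  show "Inter_space M S \<subseteq> borel_measurable M"
    using Inter_space_measurable by blast
  show "(\<lambda>_. 0) \<in> Inter_space M S"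
    by (rule Inter_space_zero)
  fix c :: real and x y
  assume x: "x \<in> Inter_space M S"
  show "(\<lambda>t. c * x t) \<in> Inter_space M S" "Sup_norm S (\<lambda>t. c * x t) = \<bar>c\<bar> * Sup_norm S x"
    using Inter_space_scale(1)[OF x] Sup_norm_scale[OF x] by blast+
  show "Sup_norm S x = 0 \<longleftrightarrow> (AE t in M. x t = 0)"
    using Sup_norm_eq_0_iff[OF x] .
  assume y: "y \<in> Inter_space M S"
  show "(\<lambda>t. x t + y t) \<in> Inter_space M S" "Sup_norm S (\<lambda>t. x t + y t) \<le> Sup_norm S x + Sup_norm S y"
    using Inter_space_add[OF x y] by blast+
next
  fix f :: "nat \<Rightarrow> 'a \<Rightarrow> real"
  assume "\<forall>n. f n \<in> Inter_space M S"
    and "\<forall>\<epsilon>>0. \<exists>K. \<forall>m\<ge>K. \<forall>n\<ge>K. Sup_norm S (\<lambda>t. f m t - f n t) < \<epsilon>"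
  then show "\<exists>g\<in>Inter_space M S. (\<lambda>n. Sup_norm S (\<lambda>t. f n t - g t)) \<longlonglongrightarrow> 0"
    by (intro Inter_space_complete) auto
next
  fix x y
  assume "x \<in> borel_measurable M" "y \<in> Inter_space M S" "AE t in M. \<bar>x t\<bar> \<le> \<bar>y t\<bar>"
  then show "x \<in> Inter_space M S" "Sup_norm S x \<le> Sup_norm S y"
    using Inter_space_ideal by blast+
qed

end

lemma J_class_Inter_is_glb:
  assumes S: "S \<subseteq> J_class M" and nonempty: "S \<noteq> {}"
  shows "(Inter_space M S, Sup_norm S) \<in> J_class M"
    and "\<And>X. X \<in> S \<Longrightarrow> sub1 (Inter_space M S, Sup_norm S) X"
    and "\<And>U. \<forall>X\<in>S. sub1 U X \<Longrightarrow> sub1 U (Inter_space M S, Sup_norm S)"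
proof -
  interpret BIS_family M S
    using S nonempty by unfold_locales (auto simp: J_class_def)
  have one: "(\<lambda>_. 1) \<in> fst X" "snd X (\<lambda>_. 1) = 1" if "X \<in> S" for X
    using S that unfolding J_class_def by auto
  have one_mem: "(\<lambda>_. 1) \<in> Inter_space M S"
    by (rule Inter_spaceI[where c=1]) (simp_all add: one)
  obtain X0 where X0: "X0 \<in> S" using nonempty by blast
  have "Sup_norm S (\<lambda>_. 1) \<le> 1"
    using one(2) by (intro Sup_norm_least[OF nonempty]) simp
  moreover have "1 \<le> Sup_norm S (\<lambda>_. 1)"
    using Sup_norm_upper[OF one_mem X0] one[OF X0] by simp
  ultimately have "Sup_norm S (\<lambda>_. 1) = 1"
    by simp
  moreover have "maximal_width M (Inter_space M S, Sup_norm S)"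
    unfolding maximal_width_def using one_mem by fastforce
  ultimately show "(Inter_space M S, Sup_norm S) \<in> J_class M"
    unfolding J_class_def using is_BIS_Inter one_mem by simp
  show "sub1 (Inter_space M S, Sup_norm S) X" if "X \<in> S" for X
    unfolding sub1_def using Inter_spaceD[OF _ that] Sup_norm_upper[OF _ that] by auto
  show "sub1 U (Inter_space M S, Sup_norm S)" if lower: "\<forall>X\<in>S. sub1 U X" for U
  proof -
    have "x \<in> Inter_space M S \<and> Sup_norm S x \<le> snd U x" if x: "x \<in> fst U" for x
    proof -
      have "x \<in> fst X \<and> snd X x \<le> snd U x" if "X \<in> S" for X
        using lower that x unfolding sub1_def by blast
      then show ?thesis
        using Inter_spaceI[of x "snd U x"] Sup_norm_least[OF nonempty, of x "snd U x"] by blast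
    qed
    then show ?thesis
      unfolding sub1_def by auto
  qed
qed

text \<open>The supremum of a set is the infimum of its upper bounds; no transitivity of the
  order is needed.\<close>
lemma dedekind_complete_if_glb:
  assumes glb: "\<And>S. S \<subseteq> J \<Longrightarrow> S \<noteq> {} \<Longrightarrow>
    \<exists>L\<in>J. (\<forall>X\<in>S. le L X) \<and> (\<forall>U\<in>J. (\<forall>X\<in>S. le U X) \<longrightarrow> le U L)"
  shows "dedekind_complete J le"
  unfolding dedekind_complete_def
proof (intro conjI allI impI)
  fix S assume S: "S \<subseteq> J \<and> S \<noteq> {} \<and> (\<exists>U\<in>J. \<forall>X\<in>S. le X U)"
  define T where "T = {U \<in> J. \<forall>X\<in>S. le X U}"
  have "T \<subseteq> J" "T \<noteq> {}"
    using S unfolding T_def by auto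
  then obtain L where "L \<in> J" "\<forall>U\<in>T. le L U" "\<forall>V\<in>J. (\<forall>U\<in>T. le V U) \<longrightarrow> le V L"
    using glb by blast
  then show "\<exists>L\<in>J. (\<forall>X\<in>S. le X L) \<and> (\<forall>U\<in>J. (\<forall>X\<in>S. le X U) \<longrightarrow> le L U)"
    using S unfolding T_def by blast
next
  fix S assume "S \<subseteq> J \<and> S \<noteq> {} \<and> (\<exists>U\<in>J. \<forall>X\<in>S. le U X)"
  then show "\<exists>L\<in>J. (\<forall>X\<in>S. le L X) \<and> (\<forall>U\<in>J. (\<forall>X\<in>S. le U X) \<longrightarrow> le U L)"
    using glb by blast
qed

theorem theorem2:
  fixes P :: "'a measure"
  assumes "prob_space P" and "admissible P" and "atomless P"
  shows "dedekind_complete (J_class P) sub1"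
proof (rule dedekind_complete_if_glb)
  fix S assume "S \<subseteq> J_class P" "S \<noteq> {}"
  note glb = J_class_Inter_is_glb[OF this]
  show "\<exists>L\<in>J_class P. (\<forall>X\<in>S. sub1 L X) \<and> (\<forall>U\<in>J_class P. (\<forall>X\<in>S. sub1 U X) \<longrightarrow> sub1 U L)"
    by (rule bexI[OF _ glb(1)]) (simp add: glb(2,3))
qed

end
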